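(* Let $\sigma_\rho>0$ and let $W$ follow the unit-log-normal distribution, i.e. $W$ has PDF $$f_W(w;\sigma_\rho)=\frac{1}{w(1-w)\sigma_\rho}\,\phi(A(w)),\qquad 0<w<1,$$ where $\phi$ is the standard normal PDF and $A(w)=\frac{1}{\sigma_\rho}\log\frac{w}{1-w}$. If $\sigma_\rho\le\sqrt2$, then $f_W(\cdot;\sigma_\rho)$ is unimodal with mode $w_0=1/2$. If $\sigma_\rho>\sqrt2$, then the equation $\frac{\sigma_\rho^2}{2}y={\rm arctanh}(y)$ has exactly two nonzero solutions $y_-<0<y_+=-y_-$, and $f_W(\cdot;\sigma_\rho)$ is bimodal with modes $$w_-=\frac{1}{1+\exp(-\sigma_\rho^2y_-)},\qquad w_+=\frac{1}{1+\exp(-\sigma_\rho^2y_+)},$$ and minimum point $w_0=1/2$, with $0<w_-<w_0<w_+<1$. Moreover, the graph of $f_W(\cdot;\sigma_\rho)$ is symmetric around $w_0=1/2$.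
   Context: This is the unit-log-symmetric distribution ${\rm ULS}(\sigma_\rho,g_c)$ with density generator $g_c(x)=\exp(-x/2)$, where $\sigma_\rho=\sigma\sqrt{2(1-\rho)}$; for this generator the ULS PDF reduces to the displayed formula. *)

theory Defs
  imports "HOL-Probability.Probability"
begin

definition ULN_A :: "real \<Rightarrow> real \<Rightarrow> real" where
  "ULN_A s w = (1 / s) * ln (w / (1 - w))"

definition ULN_pdf :: "real \<Rightarrow> real \<Rightarrow> real" where
  "ULN_pdf s w = (if 0 < w \<and> w < 1
      then 1 / (w * (1 - w) * s) * std_normal_density (ULN_A s w) else 0)"

definition unimodal_with_mode :: "(real \<Rightarrow> real) \<Rightarrow> real \<Rightarrow> bool" where
  "unimodal_with_mode f m \<longleftrightarrow> 0 < m \<and> m < 1 \<and>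
     strict_mono_on {0<..m} f \<and> strict_antimono_on {m..<1} f"

definition bimodal_with :: "(real \<Rightarrow> real) \<Rightarrow> real \<Rightarrow> real \<Rightarrow> real \<Rightarrow> bool" where
  "bimodal_with f a b c \<longleftrightarrow> 0 < a \<and> a < b \<and> b < c \<and> c < 1 \<and>
     strict_mono_on {0<..a} f \<and> strict_antimono_on {a..b} f \<and>
     strict_mono_on {b..c} f \<and> strict_antimono_on {c..<1} f"

end

theory Submission
  imports Defs
begin

text \<open>With y = 2w - 1 one has ln (w/(1-w)) = 2 artanh y, so up to a constant the log-density is
  -ln w - ln (1-w) - 2 (artanh y)^2 / s^2, and its derivative has the sign of
  E(y) = s^2 y / 2 - artanh y.  E is odd, and E'(y) = s^2/2 - 1/(1-y^2) decreases in |y|.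
  If s^2 \<le> 2, then E < 0 on (0,1), so the density increases up to 1/2 and decreases after it.
  If s^2 > 2, then E increases and then decreases on (0,1), and E(tanh s^2) < 0, so E has
  exactly one root r in (0,1); the density changes monotonicity where 2w - 1 is -r, 0 and r.
  Finally, s^2 r = 2 artanh r turns 1/(1 + exp(-s^2 r)) into (1+r)/2.\<close>

definition critical_gap :: "real \<Rightarrow> real \<Rightarrow> real" where
  "critical_gap s y = s\<^sup>2 / 2 * y - artanh y"

lemma critical_gap_minus:
  assumes "-1 < y" "y < 1"
  shows "critical_gap s (- y) = - critical_gap s y"
  using assms by (simp add: critical_gap_def)

lemma critical_gap_has_real_derivative:
  assumes "-1 < y" "y < 1"
  shows "(critical_gap s has_real_derivative s\<^sup>2 / 2 - 1 / (1 - y\<^sup>2)) (at y)"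
  unfolding critical_gap_def[abs_def] using assms
  by (auto intro!: derivative_eq_intros)

lemma continuous_on_critical_gap:
  assumes "-1 < a" "b < 1"
  shows "continuous_on {a..b} (critical_gap s)"
  unfolding critical_gap_def[abs_def] using assms
  by (intro continuous_intros) auto

lemma critical_gap_strict_increasing:
  assumes "0 \<le> a" "a < b" "b \<le> c" "c < 1" "1 / (1 - c\<^sup>2) \<le> s\<^sup>2 / 2"
  shows "critical_gap s a < critical_gap s b"
proof (rule DERIV_pos_imp_increasing_open[OF \<open>a < b\<close>])
  fix t assume t: "a < t" "t < b"
  have "t\<^sup>2 < c\<^sup>2"
    using assms t by (intro power_strict_mono) auto
  moreover have "c\<^sup>2 < 1"
    using assms by (simp add: abs_square_less_1)
  ultimately have "1 / (1 - t\<^sup>2) < 1 / (1 - c\<^sup>2)"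
    by (intro divide_strict_left_mono) auto
  then show "\<exists>d. (critical_gap s has_real_derivative d) (at t) \<and> 0 < d"
    using critical_gap_has_real_derivative[of t s] assms t by auto
qed (use assms continuous_on_critical_gap in auto)

lemma critical_gap_strict_decreasing:
  assumes "0 \<le> c" "c \<le> a" "a < b" "b < 1" "s\<^sup>2 / 2 \<le> 1 / (1 - c\<^sup>2)"
  shows "critical_gap s b < critical_gap s a"
proof (rule DERIV_neg_imp_decreasing_open[OF \<open>a < b\<close>])
  fix t assume t: "a < t" "t < b"
  have "c\<^sup>2 < t\<^sup>2"
    using assms t by (intro power_strict_mono) auto
  moreover have "t\<^sup>2 < 1"
    using assms t by (simp add: abs_square_less_1)
  ultimately have "1 / (1 - c\<^sup>2) < 1 / (1 - t\<^sup>2)"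
    by (intro divide_strict_left_mono) auto
  then show "\<exists>d. (critical_gap s has_real_derivative d) (at t) \<and> d < 0"
    using critical_gap_has_real_derivative[of t s] assms t by auto
qed (use assms continuous_on_critical_gap in auto)

lemma critical_gap_neg:
  assumes "s\<^sup>2 \<le> 2" "0 < y" "y < 1"
  shows "critical_gap s y < 0"
  using critical_gap_strict_decreasing[of 0 0 y s] assms by (simp add: critical_gap_def)

lemma critical_gap_positive_root:
  assumes "2 < s\<^sup>2"
  obtains r where "0 < r" "r < 1" "critical_gap s r = 0"
    and "\<And>y. 0 < y \<Longrightarrow> y < r \<Longrightarrow> 0 < critical_gap s y"
    and "\<And>y. r < y \<Longrightarrow> y < 1 \<Longrightarrow> critical_gap s y < 0"
proof -
  define c where "c = sqrt (1 - 2 / s\<^sup>2)"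
  have "0 < 2 / s\<^sup>2" "2 / s\<^sup>2 < 1"
    using assms by (auto simp: divide_less_eq)
  then have c: "0 < c" "c < 1" "1 / (1 - c\<^sup>2) = s\<^sup>2 / 2"
    by (auto simp: c_def real_sqrt_lt_1_iff)
  have pos_below_c: "0 < critical_gap s y" if "0 < y" "y \<le> c" for y
    using critical_gap_strict_increasing[of 0 y c s] that c by (simp add: critical_gap_def)
  have decreasing: "critical_gap s b < critical_gap s a" if "c \<le> a" "a < b" "b < 1" for a b
    using critical_gap_strict_decreasing[of c a b s] that c by simp
  define d where "d = tanh (s\<^sup>2)"
  have d: "0 < d" "d < 1"
    using assms by (auto simp: d_def tanh_real_lt_1)
  have "critical_gap s d = s\<^sup>2 * (d / 2 - 1)"
    by (simp add: critical_gap_def d_def artanh_tanh_real algebra_simps)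
  also have "\<dots> < 0"
    using assms d by (intro mult_pos_neg) auto
  finally have gap_d: "critical_gap s d < 0" .
  with pos_below_c d have "c < d"
    by force
  then obtain r where r: "c \<le> r" "r \<le> d" "critical_gap s r = 0"
    using IVT2'[of "critical_gap s" d 0 c] gap_d pos_below_c[of c] c d
      continuous_on_critical_gap[of c d s] by auto
  then have "c < r"
    using pos_below_c[of c] c by (cases "r = c") auto
  show ?thesis
  proof
    show "0 < r" "r < 1" "critical_gap s r = 0"
      using r \<open>c < r\<close> c d by auto
  next
    fix y assume "0 < y" "y < r"
    then show "0 < critical_gap s y"
      using pos_below_c[of y] decreasing[of y r] r d by (cases "y \<le> c") auto
  next
    fix y assume "r < y" "y < 1"
    then show "critical_gap s y < 0"
      using decreasing[of r y] r \<open>c < r\<close> by auto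
  qed
qed

lemma critical_gap_nonzero_roots:
  assumes "0 < r" "r < 1" "critical_gap s r = 0"
    and pos: "\<And>y. 0 < y \<Longrightarrow> y < r \<Longrightarrow> 0 < critical_gap s y"
    and neg: "\<And>y. r < y \<Longrightarrow> y < 1 \<Longrightarrow> critical_gap s y < 0"
  shows "{y. y \<noteq> 0 \<and> -1 < y \<and> y < 1 \<and> critical_gap s y = 0} = {-r, r}"
proof (intro set_eqI iffI)
  fix y assume "y \<in> {y. y \<noteq> 0 \<and> -1 < y \<and> y < 1 \<and> critical_gap s y = 0}"
  then have y: "0 < \<bar>y\<bar>" "\<bar>y\<bar> < 1" "critical_gap s \<bar>y\<bar> = 0"
    using critical_gap_minus[of y s] by (auto simp: abs_if)
  then have "\<bar>y\<bar> = r"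
    using pos[of "\<bar>y\<bar>"] neg[of "\<bar>y\<bar>"] by (cases "\<bar>y\<bar> < r"; cases "r < \<bar>y\<bar>") auto
  then show "y \<in> {-r, r}" by auto
next
  fix y assume "y \<in> {-r, r}"
  then show "y \<in> {y. y \<noteq> 0 \<and> -1 < y \<and> y < 1 \<and> critical_gap s y = 0}"
    using assms critical_gap_minus[of r s] by auto
qed

lemma logistic_at_critical_gap_root:
  assumes "-1 < y" "y < 1" "critical_gap s y = 0"
  shows "1 / (1 + exp (- s\<^sup>2 * y)) = (1 + y) / 2"
proof -
  have "s\<^sup>2 * y = ln ((1 + y) / (1 - y))"
    using assms(3) by (simp add: critical_gap_def artanh_def)
  then have exp_eq: "exp (- s\<^sup>2 * y) = (1 - y) / (1 + y)"
    using assms(1,2) by (simp add: exp_minus)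
  show ?thesis
    unfolding exp_eq using assms(1,2) by (simp add: field_simps)
qed

lemma ln_div_one_minus_eq_artanh:
  fixes w :: real
  assumes "0 < w" "w < 1"
  shows "ln (w / (1 - w)) = 2 * artanh (2 * w - 1)"
proof -
  have "(1 + (2 * w - 1)) / (1 - (2 * w - 1)) = w / (1 - w)"
    using assms by (simp add: field_simps)
  then show ?thesis by (simp add: artanh_def)
qed

definition ULN_exponent :: "real \<Rightarrow> real \<Rightarrow> real" where
  "ULN_exponent s w = - ln w - ln (1 - w) - 2 * (artanh (2 * w - 1))\<^sup>2 / s\<^sup>2"

lemma ULN_pdf_eq_exp:
  assumes "0 < w" "w < 1"
  shows "ULN_pdf s w = exp (ULN_exponent s w) / (s * sqrt (2 * pi))"
proof -
  have A: "- (ULN_A s w)\<^sup>2 / 2 = - 2 * (artanh (2 * w - 1))\<^sup>2 / s\<^sup>2"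
    using assms by (simp add: ULN_A_def ln_div_one_minus_eq_artanh power_mult_distrib power_divide)
  have "exp (ULN_exponent s w) = exp (- ln w) * exp (- ln (1 - w)) * exp (- (ULN_A s w)\<^sup>2 / 2)"
    unfolding A ULN_exponent_def by (simp flip: exp_add)
  also have "\<dots> = exp (- (ULN_A s w)\<^sup>2 / 2) / (w * (1 - w))"
    using assms by (simp add: exp_minus field_simps)
  finally show ?thesis
    using assms by (simp add: ULN_pdf_def std_normal_density_def)
qed

lemma ULN_pdf_symmetric: "ULN_pdf s (1 - w) = ULN_pdf s w"
proof (cases "0 < w \<and> w < 1")
  case True
  have "artanh (2 * (1 - w) - 1) = artanh (- (2 * w - 1))"
    by (simp add: algebra_simps)
  also have "\<dots> = - artanh (2 * w - 1)"
    using True by (intro artanh_minus_real) auto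
  finally have "ULN_exponent s (1 - w) = ULN_exponent s w"
    by (simp add: ULN_exponent_def)
  then show ?thesis
    using True ULN_pdf_eq_exp[of w s] ULN_pdf_eq_exp[of "1 - w" s] by simp
qed (auto simp: ULN_pdf_def)

lemma ULN_exponent_has_real_derivative:
  assumes "s \<noteq> 0" "0 < w" "w < 1"
  shows "(ULN_exponent s has_real_derivative
           2 * critical_gap s (2 * w - 1) / (s\<^sup>2 * (w * (1 - w)))) (at w)"
proof -
  let ?y = "2 * w - 1"
  have "\<bar>?y\<bar> < 1" using assms by auto
  then have "(artanh has_real_derivative 1 / (1 - ?y\<^sup>2)) (at ?y)"
    by (rule artanh_real_has_field_derivative)
  moreover have "((\<lambda>x. 2 * x - 1) has_real_derivative 2) (at w)"
    by (auto intro!: derivative_eq_intros)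
  ultimately have artanh_y: "((\<lambda>x. artanh (2 * x - 1)) has_real_derivative 2 / (1 - ?y\<^sup>2)) (at w)"
    using DERIV_chain2 by fastforce
  have "(ULN_exponent s has_real_derivative
          - (1 / w) + 1 / (1 - w) - 2 * (2 * artanh ?y * (2 / (1 - ?y\<^sup>2))) / s\<^sup>2) (at w)"
    unfolding ULN_exponent_def[abs_def] using assms
    by (auto intro!: derivative_eq_intros artanh_y simp: power4_eq_xxxx power2_eq_square)
  moreover have "- (1 / w) + 1 / (1 - w) - 2 * (2 * artanh ?y * (2 / (1 - ?y\<^sup>2))) / s\<^sup>2
      = 2 * critical_gap s ?y / (s\<^sup>2 * (w * (1 - w)))"
  proof -
    define p where "p = w * (1 - w)"
    have "0 < p" and y2: "1 - ?y\<^sup>2 = 4 * p" and lin: "- (1 / w) + 1 / (1 - w) = ?y / p"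
      using assms by (auto simp: p_def power2_eq_square field_simps)
    then show ?thesis
      unfolding y2 lin p_def[symmetric] critical_gap_def using assms(1) by (simp add: field_simps)
  qed
  ultimately show ?thesis by simp
qed

lemma ULN_pdf_less_if_critical_gap_pos:
  assumes "0 < s" "0 < x" "x < y" "y < 1"
    and gap: "\<And>t. x < t \<Longrightarrow> t < y \<Longrightarrow> 0 < critical_gap s (2 * t - 1)"
  shows "ULN_pdf s x < ULN_pdf s y"
proof -
  have "ULN_exponent s x < ULN_exponent s y"
  proof (rule DERIV_pos_imp_increasing_open[OF \<open>x < y\<close>])
    fix t assume t: "x < t" "t < y"
    then have "0 < 2 * critical_gap s (2 * t - 1) / (s\<^sup>2 * (t * (1 - t)))"
      using assms gap[OF t] by simp
    then show "\<exists>d. (ULN_exponent s has_real_derivative d) (at t) \<and> 0 < d"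
      using ULN_exponent_has_real_derivative[of s t] assms t by auto
  next
    show "continuous_on {x..y} (ULN_exponent s)"
      using assms unfolding ULN_exponent_def by (intro continuous_intros) auto
  qed
  then show ?thesis
    using assms by (simp add: ULN_pdf_eq_exp divide_strict_right_mono)
qed

lemma ULN_pdf_less_if_critical_gap_neg:
  assumes "0 < s" "0 < x" "x < y" "y < 1"
    and gap: "\<And>t. x < t \<Longrightarrow> t < y \<Longrightarrow> critical_gap s (2 * t - 1) < 0"
  shows "ULN_pdf s y < ULN_pdf s x"
proof -
  have "ULN_pdf s (1 - y) < ULN_pdf s (1 - x)"
  proof (rule ULN_pdf_less_if_critical_gap_pos)
    fix t assume t: "1 - y < t" "t < 1 - x"
    then have "critical_gap s (- (2 * t - 1)) < 0"
      using gap[of "1 - t"] by (simp add: algebra_simps)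
    then show "0 < critical_gap s (2 * t - 1)"
      using critical_gap_minus[of "2 * t - 1" s] t assms by simp
  qed (use assms in auto)
  then show ?thesis by (simp add: ULN_pdf_symmetric)
qed

lemma ULN_pdf_strict_mono_on:
  assumes "0 < s" "S \<subseteq> {a..b} \<inter> {0<..<1}"
    and "\<And>t. a < t \<Longrightarrow> t < b \<Longrightarrow> 0 < critical_gap s (2 * t - 1)"
  shows "strict_mono_on S (ULN_pdf s)"
proof (rule strict_mono_onI)
  fix x y assume xy: "x \<in> S" "y \<in> S" "x < y"
  then have "a \<le> x" "y \<le> b" "0 < x" "y < 1"
    using assms(2) by auto
  then show "ULN_pdf s x < ULN_pdf s y"
    by (intro ULN_pdf_less_if_critical_gap_pos) (use assms xy in auto)
qed

lemma ULN_pdf_strict_antimono_on: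
  assumes "0 < s" "S \<subseteq> {a..b} \<inter> {0<..<1}"
    and "\<And>t. a < t \<Longrightarrow> t < b \<Longrightarrow> critical_gap s (2 * t - 1) < 0"
  shows "strict_antimono_on S (ULN_pdf s)"
proof (rule monotone_onI)
  fix x y assume xy: "x \<in> S" "y \<in> S" "x < y"
  then have "a \<le> x" "y \<le> b" "0 < x" "y < 1"
    using assms(2) by auto
  then show "ULN_pdf s y < ULN_pdf s x"
    by (intro ULN_pdf_less_if_critical_gap_neg) (use assms xy in auto)
qed

lemma ULN_pdf_unimodal:
  assumes "0 < s" "s\<^sup>2 \<le> 2"
  shows "unimodal_with_mode (ULN_pdf s) (1/2)"
proof -
  have "0 < critical_gap s (2 * t - 1)" if "0 < t" "t < 1/2" for t
    using critical_gap_neg[OF assms(2), of "1 - 2 * t"] critical_gap_minus[of "1 - 2 * t" s] that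
    by simp
  moreover have "critical_gap s (2 * t - 1) < 0" if "1/2 < t" "t < 1" for t
    using critical_gap_neg[OF assms(2), of "2 * t - 1"] that by simp
  ultimately show ?thesis
    unfolding unimodal_with_mode_def using assms(1)
    by (auto intro!: ULN_pdf_strict_mono_on[of s _ 0 "1/2"] ULN_pdf_strict_antimono_on[of s _ "1/2" 1])
qed

lemma ULN_pdf_bimodal:
  assumes "0 < s" "0 < r" "r < 1"
    and pos: "\<And>y. 0 < y \<Longrightarrow> y < r \<Longrightarrow> 0 < critical_gap s y"
    and neg: "\<And>y. r < y \<Longrightarrow> y < 1 \<Longrightarrow> critical_gap s y < 0"
  shows "bimodal_with (ULN_pdf s) ((1 - r) / 2) (1/2) ((1 + r) / 2)"
proof -
  have "0 < critical_gap s (2 * t - 1)" if "0 < t" "t < (1 - r) / 2" for t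
    using neg[of "1 - 2 * t"] critical_gap_minus[of "1 - 2 * t" s] that assms(2) by simp
  then have rise_low: "strict_mono_on {0<..(1 - r) / 2} (ULN_pdf s)"
    using assms(1,2) by (intro ULN_pdf_strict_mono_on[of s _ 0 "(1 - r) / 2"]) auto
  have "critical_gap s (2 * t - 1) < 0" if "(1 - r) / 2 < t" "t < 1/2" for t
    using pos[of "1 - 2 * t"] critical_gap_minus[of "1 - 2 * t" s] that assms(3) by simp
  then have fall_low: "strict_antimono_on {(1 - r) / 2..1/2} (ULN_pdf s)"
    using assms(1,3) by (intro ULN_pdf_strict_antimono_on[of s _ "(1 - r) / 2" "1/2"]) auto
  have "0 < critical_gap s (2 * t - 1)" if "1/2 < t" "t < (1 + r) / 2" for t
    using pos[of "2 * t - 1"] that by simp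
  then have rise_high: "strict_mono_on {1/2..(1 + r) / 2} (ULN_pdf s)"
    using assms(1,3) by (intro ULN_pdf_strict_mono_on[of s _ "1/2" "(1 + r) / 2"]) auto
  have "critical_gap s (2 * t - 1) < 0" if "(1 + r) / 2 < t" "t < 1" for t
    using neg[of "2 * t - 1"] that by simp
  then have fall_high: "strict_antimono_on {(1 + r) / 2..<1} (ULN_pdf s)"
    using assms(1,2) by (intro ULN_pdf_strict_antimono_on[of s _ "(1 + r) / 2" 1]) auto
  show ?thesis
    unfolding bimodal_with_def using rise_low fall_low rise_high fall_high assms(2,3) by simp
qed

theorem theorem1:
  fixes s :: real
  assumes "s > 0"
  shows "(s \<le> sqrt 2 \<longrightarrow> unimodal_with_mode (ULN_pdf s) (1/2))
    \<and> (s > sqrt 2 \<longrightarrow>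
        (\<exists>ym yp. ym < 0 \<and> 0 < yp \<and> yp = - ym \<and>
           {y. y \<noteq> 0 \<and> -1 < y \<and> y < 1 \<and> s\<^sup>2 / 2 * y = artanh y} = {ym, yp} \<and>
           (let wm = 1 / (1 + exp (- s\<^sup>2 * ym)); wp = 1 / (1 + exp (- s\<^sup>2 * yp)) in
              0 < wm \<and> wm < 1/2 \<and> 1/2 < wp \<and> wp < 1 \<and>
              bimodal_with (ULN_pdf s) wm (1/2) wp)))
    \<and> (\<forall>w. 0 < w \<and> w < 1 \<longrightarrow> ULN_pdf s (1 - w) = ULN_pdf s w)"
proof (intro conjI impI allI)
  assume "s \<le> sqrt 2"
  then have "s\<^sup>2 \<le> 2"
    using sqrt_ge_absD[of s 2] assms by simp
  with assms show "unimodal_with_mode (ULN_pdf s) (1/2)"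
    by (rule ULN_pdf_unimodal)
next
  assume "s > sqrt 2"
  then have "2 < s\<^sup>2"
    using power_strict_mono[of "sqrt 2" s 2] by simp
  then obtain r where r: "0 < r" "r < 1" "critical_gap s r = 0"
    and pos: "\<And>y. 0 < y \<Longrightarrow> y < r \<Longrightarrow> 0 < critical_gap s y"
    and neg: "\<And>y. r < y \<Longrightarrow> y < 1 \<Longrightarrow> critical_gap s y < 0"
    using critical_gap_positive_root by blast
  have roots: "{y. y \<noteq> 0 \<and> -1 < y \<and> y < 1 \<and> s\<^sup>2 / 2 * y = artanh y} = {-r, r}"
    using critical_gap_nonzero_roots[OF r pos neg] by (simp add: critical_gap_def)
  have wm: "1 / (1 + exp (- s\<^sup>2 * (- r))) = (1 - r) / 2"
    using logistic_at_critical_gap_root[of "- r" s] r critical_gap_minus[of r s] by simp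
  have wp: "1 / (1 + exp (- s\<^sup>2 * r)) = (1 + r) / 2"
    using logistic_at_critical_gap_root[of r s] r by simp
  show "\<exists>ym yp. ym < 0 \<and> 0 < yp \<and> yp = - ym \<and>
           {y. y \<noteq> 0 \<and> -1 < y \<and> y < 1 \<and> s\<^sup>2 / 2 * y = artanh y} = {ym, yp} \<and>
           (let wm = 1 / (1 + exp (- s\<^sup>2 * ym)); wp = 1 / (1 + exp (- s\<^sup>2 * yp)) in
              0 < wm \<and> wm < 1/2 \<and> 1/2 < wp \<and> wp < 1 \<and>
              bimodal_with (ULN_pdf s) wm (1/2) wp)"
    using ULN_pdf_bimodal[OF assms r(1,2) pos neg] r(1,2) roots
    unfolding Let_def by (intro exI[of _ "- r"] exI[of _ r]) (simp only: wm wp, simp)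
qed (rule ULN_pdf_symmetric)

end
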